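(* Let $(f,g),(f',g')\in\Theta$ with logits $u,u'$, fix $x\in\mathcal X$, and suppose $\min_{y\in\mathcal Y}p_{f,g}(y\mid x)\ge\tau$ for some $0<\tau\le1/3$. Writing $K=\mathrm{KL}(p_{f,g}(\cdot\mid x)\|p_{f',g'}(\cdot\mid x))$, one has $$\|u(x)-u'(x)\|^2\le\frac{12\log(\tau)^2}{\tau}K+\frac{9}{\tau^2}K^2.$$ If in addition $\min_{y\in\mathcal Y}p_{f',g'}(y\mid x)\ge\tau$, then $\|u(x)-u'(x)\|^2\le\frac{4\log(\tau)^2}{\tau}K$.
   Context: Model class $\Theta$: pairs $(f,g)$, $f:\mathcal X\to\mathbb R^m$, $g:\mathcal Y\to\mathbb R^m$, $\mathcal Y=\{y_1,\dots,y_k\}$, with the centering convention $\sum_y g(y)=0$ (same for $g'$), inducing $p_{f,g}(y\mid x)=\exp(f(x)^\top g(y))/\sum_{y'}\exp(f(x)^\top g(y'))$. Logits $u(x)_i=f(x)^\top g(y_i)$, $u'(x)_i=f'(x)^\top g'(y_i)$. *)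

theory Defs
  imports "HOL-Analysis.Analysis"
begin

text \<open>The label set Y = {y_1,...,y_k} is a finite type 'y (k = CARD('y)); embeddings live
in real^'m. A pair (f,g) belongs to Theta iff g is centred: sum over y of g y = 0.\<close>

definition in_Theta :: "('x \<Rightarrow> real^'m) \<Rightarrow> ('y::finite \<Rightarrow> real^'m) \<Rightarrow> bool" where
  "in_Theta f g \<longleftrightarrow> (\<Sum>y\<in>UNIV. g y) = 0"

definition logits :: "('x \<Rightarrow> real^'m) \<Rightarrow> ('y::finite \<Rightarrow> real^'m) \<Rightarrow> 'x \<Rightarrow> real^'y" where
  "logits f g x = (\<chi> y. f x \<bullet> g y)"

definition cond_prob :: "('x \<Rightarrow> real^'m) \<Rightarrow> ('y::finite \<Rightarrow> real^'m) \<Rightarrow> 'x \<Rightarrow> 'y \<Rightarrow> real" where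
  "cond_prob f g x y = exp (f x \<bullet> g y) / (\<Sum>y'\<in>UNIV. exp (f x \<bullet> g y'))"

definition KL :: "('y::finite \<Rightarrow> real) \<Rightarrow> ('y \<Rightarrow> real) \<Rightarrow> real" where
  "KL p q = (\<Sum>y\<in>UNIV. p y * ln (p y / q y))"

end

theory Submission
  imports Defs
begin

(* Let \<phi>(t) = exp t - 1 - t \<ge> 0 (exp_remainder below). For positive p, q of equal mass,
   KL(p || q) = \<Sum>y p_y \<phi>(t_y) with t_y = ln (q_y / p_y), since the terms q_y - p_y cancel.
   With L = -ln \<tau> \<ge> 1 one has t\<^sup>2 \<le> 4 L\<^sup>2 \<phi>(t) + 9 \<phi>(t)\<^sup>2 for all t, and t\<^sup>2 \<le> 4 L\<^sup>2 \<phi>(t)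
   when |t| \<le> L, which is the case when both p_y and q_y lie in [\<tau>, 1]. As p_y \<ge> \<tau>, \<Sum>y \<phi>(t_y) \<le> K/\<tau>,
   and this bounds \<Sum>y t_y\<^sup>2. Finally u(x) - u'(x) is the vector (-t_y)_y shifted by the difference
   of the log-partition functions; both logit vectors are centred, so dropping the shift can
   only decrease the norm. The argument even gives 4 in place of the constant 12. *)

definition exp_remainder :: "real \<Rightarrow> real" where
  "exp_remainder t = exp t - 1 - t"

lemma exp_remainder_nonneg: "0 \<le> exp_remainder t"
  unfolding exp_remainder_def using exp_ge_add_one_self[of t] by linarith

lemma sq_le_exp_remainder_of_ge:
  assumes "t \<ge> -3/2"
  shows "t\<^sup>2 \<le> 4 * exp_remainder t"
proof -
  have "(1 + t/3)^3 \<le> exp (t/3) ^ 3"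
    using assms by (intro power_mono exp_ge_add_one_self) auto
  also have "exp (t/3) ^ 3 = exp t"
    by (simp add: exp_of_nat_mult[symmetric])
  finally have cube: "(1 + t/3)^3 \<le> exp t" .
  have "4 * ((1 + t/3)^3 - 1 - t) - t\<^sup>2 = t\<^sup>2 * (1/3 + 4*t/27)"
    by (simp add: power2_eq_square power3_eq_cube field_simps)
  also have "\<dots> \<ge> 0"
    using assms by (intro mult_nonneg_nonneg) auto
  finally show ?thesis
    using cube unfolding exp_remainder_def by argo
qed

lemma abs_le_exp_remainder_of_le:
  assumes "t \<le> -3/2"
  shows "\<bar>t\<bar> \<le> 3 * exp_remainder t"
  using assms exp_gt_zero[of t] unfolding exp_remainder_def by argo

lemma sq_le_exp_remainder:
  assumes "L \<ge> 1"
  shows "t\<^sup>2 \<le> 4 * L\<^sup>2 * exp_remainder t + 9 * (exp_remainder t)\<^sup>2"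
proof (cases "t \<ge> -3/2")
  case True
  have "1 * exp_remainder t \<le> L\<^sup>2 * exp_remainder t"
    using assms by (intro mult_right_mono exp_remainder_nonneg) (simp add: one_le_power)
  then show ?thesis
    using sq_le_exp_remainder_of_ge[OF True] zero_le_power2[of "exp_remainder t"] by linarith
next
  case False
  then have "\<bar>t\<bar>\<^sup>2 \<le> (3 * exp_remainder t)\<^sup>2"
    by (intro power_mono abs_le_exp_remainder_of_le) auto
  also have "\<dots> = 9 * (exp_remainder t)\<^sup>2"
    by (subst power_mult_distrib) simp
  finally have "t\<^sup>2 \<le> 9 * (exp_remainder t)\<^sup>2"
    by simp
  moreover have "0 \<le> 4 * L\<^sup>2 * exp_remainder t"
    by (simp add: exp_remainder_nonneg)
  ultimately show ?thesis
    by linarith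
qed

lemma sq_le_exp_remainder_of_abs_le:
  assumes "L \<ge> 1" and "\<bar>t\<bar> \<le> L"
  shows "t\<^sup>2 \<le> 4 * L\<^sup>2 * exp_remainder t"
proof (cases "t \<ge> -3/2")
  case True
  have "1 * exp_remainder t \<le> L\<^sup>2 * exp_remainder t"
    using assms by (intro mult_right_mono exp_remainder_nonneg) (simp add: one_le_power)
  then show ?thesis
    using sq_le_exp_remainder_of_ge[OF True] by linarith
next
  case False
  then have bound: "\<bar>t\<bar> \<le> 3 * exp_remainder t"
    by (intro abs_le_exp_remainder_of_le) auto
  have "t\<^sup>2 = \<bar>t\<bar> * \<bar>t\<bar>"
    by (simp add: power2_eq_square)
  also have "\<dots> \<le> L * (3 * exp_remainder t)"
    using assms bound by (intro mult_mono) auto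
  also have "\<dots> = (3 * L) * exp_remainder t"
    by simp
  also have "\<dots> \<le> (4 * L\<^sup>2) * exp_remainder t"
    using assms(1) mult_left_mono[of 1 L L]
    by (intro mult_right_mono exp_remainder_nonneg) (simp add: power2_eq_square)
  finally show ?thesis .
qed

lemma sum_power2_le_power2_sum:
  fixes a :: "'a \<Rightarrow> real"
  assumes "finite A" and "\<And>y. y \<in> A \<Longrightarrow> 0 \<le> a y"
  shows "(\<Sum>y\<in>A. (a y)\<^sup>2) \<le> (\<Sum>y\<in>A. a y)\<^sup>2"
proof -
  have "(\<Sum>y\<in>A. a y * a y) \<le> (\<Sum>y\<in>A. a y * (\<Sum>z\<in>A. a z))"
    using assms by (intro sum_mono mult_left_mono member_le_sum) auto
  then show ?thesis
    by (simp add: power2_eq_square sum_distrib_right)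
qed

lemma sum_power2_shift_le:
  fixes a :: "'a \<Rightarrow> real"
  assumes "finite A" and "(\<Sum>y\<in>A. a y + c) = 0"
  shows "(\<Sum>y\<in>A. (a y + c)\<^sup>2) \<le> (\<Sum>y\<in>A. (a y)\<^sup>2)"
proof -
  have "(\<Sum>y\<in>A. (a y)\<^sup>2) = (\<Sum>y\<in>A. (a y + c)\<^sup>2 - 2 * c * (a y + c) + c\<^sup>2)"
    by (intro sum.cong) (auto simp: power2_eq_square algebra_simps)
  also have "\<dots> = (\<Sum>y\<in>A. (a y + c)\<^sup>2) - (\<Sum>y\<in>A. 2 * c * (a y + c)) + (\<Sum>y\<in>A. c\<^sup>2)"
    by (simp only: sum.distrib sum_subtractf)
  also have "(\<Sum>y\<in>A. 2 * c * (a y + c)) = 2 * c * (\<Sum>y\<in>A. a y + c)"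
    by (rule sum_distrib_left[symmetric])
  finally show ?thesis
    using assms(2) by simp
qed

lemma KL_eq_sum_exp_remainder:
  fixes p q :: "'y::finite \<Rightarrow> real"
  assumes "\<And>y. 0 < p y" and "\<And>y. 0 < q y" and "(\<Sum>y\<in>UNIV. p y) = (\<Sum>y\<in>UNIV. q y)"
  shows "KL p q = (\<Sum>y\<in>UNIV. p y * exp_remainder (- ln (p y / q y)))"
proof -
  have "p y * exp_remainder (- ln (p y / q y)) = q y - p y + p y * ln (p y / q y)" for y
    using assms(1,2)[of y] by (simp add: exp_remainder_def exp_minus field_simps)
  then have "(\<Sum>y\<in>UNIV. p y * exp_remainder (- ln (p y / q y)))
      = (\<Sum>y\<in>UNIV. q y) - (\<Sum>y\<in>UNIV. p y) + KL p q"
    by (simp add: KL_def sum.distrib sum_subtractf)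
  then show ?thesis
    using assms(3) by simp
qed

lemma KL_nonneg:
  fixes p q :: "'y::finite \<Rightarrow> real"
  assumes "\<And>y. 0 < p y" and "\<And>y. 0 < q y" and "(\<Sum>y\<in>UNIV. p y) = (\<Sum>y\<in>UNIV. q y)"
  shows "0 \<le> KL p q"
  unfolding KL_eq_sum_exp_remainder[OF assms]
  using assms(1) by (intro sum_nonneg mult_nonneg_nonneg less_imp_le exp_remainder_nonneg)

lemma sum_exp_remainder_le_KL:
  fixes p q :: "'y::finite \<Rightarrow> real"
  assumes "\<And>y. 0 < p y" and "\<And>y. 0 < q y" and "(\<Sum>y\<in>UNIV. p y) = (\<Sum>y\<in>UNIV. q y)"
    and "0 < \<tau>" and "\<And>y. \<tau> \<le> p y"
  shows "(\<Sum>y\<in>UNIV. exp_remainder (- ln (p y / q y))) \<le> KL p q / \<tau>"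
proof -
  have "\<tau> * (\<Sum>y\<in>UNIV. exp_remainder (- ln (p y / q y)))
      \<le> (\<Sum>y\<in>UNIV. p y * exp_remainder (- ln (p y / q y)))"
    unfolding sum_distrib_left using assms(5)
    by (intro sum_mono mult_right_mono exp_remainder_nonneg)
  then show ?thesis
    using assms(4) by (simp add: KL_eq_sum_exp_remainder[OF assms(1-3)] field_simps)
qed

lemma sum_ln_ratio_sq_le_KL:
  fixes p q :: "'y::finite \<Rightarrow> real"
  assumes "\<And>y. 0 < p y" and "\<And>y. 0 < q y" and "(\<Sum>y\<in>UNIV. p y) = (\<Sum>y\<in>UNIV. q y)"
    and "0 < \<tau>" and "ln \<tau> \<le> -1" and "\<And>y. \<tau> \<le> p y"
  shows "(\<Sum>y\<in>UNIV. (ln (p y / q y))\<^sup>2)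
           \<le> 4 * (ln \<tau>)\<^sup>2 / \<tau> * KL p q + 9 / \<tau>\<^sup>2 * (KL p q)\<^sup>2"
proof -
  define r where "r y = exp_remainder (- ln (p y / q y))" for y
  have sum_r: "(\<Sum>y\<in>UNIV. r y) \<le> KL p q / \<tau>"
    unfolding r_def using assms by (intro sum_exp_remainder_le_KL)
  have "(\<Sum>y\<in>UNIV. (r y)\<^sup>2) \<le> (\<Sum>y\<in>UNIV. r y)\<^sup>2"
    unfolding r_def by (intro sum_power2_le_power2_sum exp_remainder_nonneg) simp
  also have "\<dots> \<le> (KL p q / \<tau>)\<^sup>2"
    using sum_r by (intro power_mono sum_nonneg) (simp_all add: r_def exp_remainder_nonneg)
  finally have sum_r_sq: "(\<Sum>y\<in>UNIV. (r y)\<^sup>2) \<le> (KL p q / \<tau>)\<^sup>2" .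
  have "(\<Sum>y\<in>UNIV. (ln (p y / q y))\<^sup>2) \<le> (\<Sum>y\<in>UNIV. 4 * (ln \<tau>)\<^sup>2 * r y + 9 * (r y)\<^sup>2)"
    using sq_le_exp_remainder[of "- ln \<tau>"] assms(5) unfolding r_def
    by (intro sum_mono) (metis power2_minus neg_le_iff_le minus_minus)
  also have "\<dots> = 4 * (ln \<tau>)\<^sup>2 * (\<Sum>y\<in>UNIV. r y) + 9 * (\<Sum>y\<in>UNIV. (r y)\<^sup>2)"
    by (simp add: sum.distrib sum_distrib_left)
  also have "\<dots> \<le> 4 * (ln \<tau>)\<^sup>2 * (KL p q / \<tau>) + 9 * (KL p q / \<tau>)\<^sup>2"
    using sum_r sum_r_sq by (intro add_mono mult_left_mono) auto
  finally show ?thesis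
    by (simp add: power_divide)
qed

lemma sum_ln_ratio_sq_le_KL_of_both_ge:
  fixes p q :: "'y::finite \<Rightarrow> real"
  assumes "\<And>y. 0 < p y" and "\<And>y. 0 < q y" and "(\<Sum>y\<in>UNIV. p y) = (\<Sum>y\<in>UNIV. q y)"
    and "\<And>y. p y \<le> 1" and "\<And>y. q y \<le> 1"
    and "0 < \<tau>" and "ln \<tau> \<le> -1" and "\<And>y. \<tau> \<le> p y" and "\<And>y. \<tau> \<le> q y"
  shows "(\<Sum>y\<in>UNIV. (ln (p y / q y))\<^sup>2) \<le> 4 * (ln \<tau>)\<^sup>2 / \<tau> * KL p q"
proof -
  have ln_ratio_bound: "\<bar>- ln (p y / q y)\<bar> \<le> - ln \<tau>" for y
  proof -
    have "ln \<tau> \<le> ln (p y)" "ln \<tau> \<le> ln (q y)" "ln (p y) \<le> 0" "ln (q y) \<le> 0"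
      using assms(1,2,4,5,8,9)[of y] assms(6) by simp_all
    moreover have "- ln (p y / q y) = ln (q y) - ln (p y)"
      using assms(1,2)[of y] by (simp add: ln_div)
    ultimately show ?thesis
      unfolding abs_le_iff by linarith
  qed
  have "(\<Sum>y\<in>UNIV. (ln (p y / q y))\<^sup>2)
      \<le> (\<Sum>y\<in>UNIV. 4 * (ln \<tau>)\<^sup>2 * exp_remainder (- ln (p y / q y)))"
    using sq_le_exp_remainder_of_abs_le[OF _ ln_ratio_bound] assms(7)
    by (intro sum_mono) simp
  also have "\<dots> = 4 * (ln \<tau>)\<^sup>2 * (\<Sum>y\<in>UNIV. exp_remainder (- ln (p y / q y)))"
    by (simp add: sum_distrib_left)
  also have "\<dots> \<le> 4 * (ln \<tau>)\<^sup>2 * (KL p q / \<tau>)"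
    using assms by (intro mult_left_mono sum_exp_remainder_le_KL) auto
  finally show ?thesis
    by simp
qed

lemma cond_prob_pos: "0 < cond_prob f g x y"
  unfolding cond_prob_def by (intro divide_pos_pos exp_gt_zero sum_pos) auto

lemma sum_cond_prob: "(\<Sum>y\<in>UNIV. cond_prob f g x y) = 1"
proof -
  have "0 < (\<Sum>y\<in>UNIV. exp (f x \<bullet> g y))"
    by (intro sum_pos) auto
  then show ?thesis
    unfolding cond_prob_def by (simp add: sum_divide_distrib[symmetric])
qed

lemma cond_prob_le_one: "cond_prob f g x y \<le> 1"
proof -
  have "cond_prob f g x y \<le> (\<Sum>y\<in>UNIV. cond_prob f g x y)"
    by (rule member_le_sum) (simp_all add: cond_prob_pos less_imp_le)
  then show ?thesis
    by (simp add: sum_cond_prob)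
qed

lemma logits_eq_ln_cond_prob:
  "logits f g x $ y = ln (cond_prob f g x y) + ln (\<Sum>y'\<in>UNIV. exp (f x \<bullet> g y'))"
proof -
  have "0 < (\<Sum>y\<in>UNIV. exp (f x \<bullet> g y))"
    by (intro sum_pos) auto
  then show ?thesis
    by (simp add: logits_def cond_prob_def ln_div)
qed

lemma sum_logits_eq_0:
  assumes "in_Theta f g"
  shows "(\<Sum>y\<in>UNIV. logits f g x $ y) = 0"
  using assms by (simp add: logits_def in_Theta_def inner_sum_right[symmetric])

lemma power2_norm_logits_diff_le:
  assumes "in_Theta f g" and "in_Theta f' g'"
  shows "(norm (logits f g x - logits f' g' x))\<^sup>2
           \<le> (\<Sum>y\<in>UNIV. (ln (cond_prob f g x y / cond_prob f' g' x y))\<^sup>2)"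
proof -
  define c where "c = ln (\<Sum>y\<in>UNIV. exp (f x \<bullet> g y)) - ln (\<Sum>y\<in>UNIV. exp (f' x \<bullet> g' y))"
  have component: "(logits f g x - logits f' g' x) $ y
      = ln (cond_prob f g x y / cond_prob f' g' x y) + c" for y
    using cond_prob_pos[of f g x y] cond_prob_pos[of f' g' x y]
    by (simp add: logits_eq_ln_cond_prob c_def ln_div)
  have "(\<Sum>y\<in>UNIV. ln (cond_prob f g x y / cond_prob f' g' x y) + c) = 0"
    using sum_logits_eq_0[OF assms(1)] sum_logits_eq_0[OF assms(2)]
    by (simp add: component[symmetric] sum_subtractf)
  moreover have "(norm (logits f g x - logits f' g' x))\<^sup>2
      = (\<Sum>y\<in>UNIV. (ln (cond_prob f g x y / cond_prob f' g' x y) + c)\<^sup>2)"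
    unfolding power2_norm_eq_inner inner_vec_def component by (simp add: power2_eq_square)
  ultimately show ?thesis
    by (simp add: sum_power2_shift_le)
qed

lemma ln_le_minus_one_of_le_one_third:
  fixes \<tau> :: real
  assumes "0 < \<tau>" and "\<tau> \<le> 1/3"
  shows "ln \<tau> \<le> -1"
proof -
  have "1/3 \<le> exp (-1::real)"
    using exp_le by (simp add: exp_minus field_simps)
  then have "\<tau> \<le> exp (-1)"
    using assms(2) by linarith
  then show ?thesis
    using ln_mono[OF _ assms(1)] by fastforce
qed

theorem mainTheorem18:
  fixes f f' :: "'x \<Rightarrow> real^'m" and g g' :: "'y::finite \<Rightarrow> real^'m"
    and x :: 'x and \<tau> :: real
  assumes "in_Theta f g" and "in_Theta f' g'"
    and "0 < \<tau>" and "\<tau> \<le> 1/3"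
    and "Min (range (\<lambda>y. cond_prob f g x y)) \<ge> \<tau>"
  shows "(norm (logits f g x - logits f' g' x))\<^sup>2
           \<le> 12 * (ln \<tau>)\<^sup>2 / \<tau> * KL (cond_prob f g x) (cond_prob f' g' x)
             + 9 / \<tau>\<^sup>2 * (KL (cond_prob f g x) (cond_prob f' g' x))\<^sup>2
         \<and> (Min (range (\<lambda>y. cond_prob f' g' x y)) \<ge> \<tau> \<longrightarrow>
            (norm (logits f g x - logits f' g' x))\<^sup>2
              \<le> 4 * (ln \<tau>)\<^sup>2 / \<tau> * KL (cond_prob f g x) (cond_prob f' g' x))"
proof -
  let ?p = "cond_prob f g x" and ?q = "cond_prob f' g' x"
  let ?K = "KL ?p ?q"
  have probs: "\<And>y. 0 < ?p y" "\<And>y. 0 < ?q y" "(\<Sum>y\<in>UNIV. ?p y) = (\<Sum>y\<in>UNIV. ?q y)"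
    by (simp_all add: cond_prob_pos sum_cond_prob)
  have ln_\<tau>: "ln \<tau> \<le> -1"
    using assms(3,4) by (rule ln_le_minus_one_of_le_one_third)
  have ge_of_Min: "\<tau> \<le> h y" if "\<tau> \<le> Min (range h)" for h :: "'y \<Rightarrow> real" and y
    using that Min_le[of "range h" "h y"] by simp
  have norm_le: "(norm (logits f g x - logits f' g' x))\<^sup>2 \<le> (\<Sum>y\<in>UNIV. (ln (?p y / ?q y))\<^sup>2)"
    using assms(1,2) by (rule power2_norm_logits_diff_le)
  have "4 * (ln \<tau>)\<^sup>2 / \<tau> * ?K \<le> 12 * (ln \<tau>)\<^sup>2 / \<tau> * ?K"
    using assms(3) KL_nonneg[OF probs] by (intro mult_right_mono divide_right_mono) auto
  with norm_le sum_ln_ratio_sq_le_KL[OF probs assms(3) ln_\<tau> ge_of_Min[OF assms(5)]]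
  have "(norm (logits f g x - logits f' g' x))\<^sup>2 \<le> 12 * (ln \<tau>)\<^sup>2 / \<tau> * ?K + 9 / \<tau>\<^sup>2 * ?K\<^sup>2"
    by linarith
  moreover have "(norm (logits f g x - logits f' g' x))\<^sup>2 \<le> 4 * (ln \<tau>)\<^sup>2 / \<tau> * ?K"
    if "Min (range ?q) \<ge> \<tau>"
    using norm_le sum_ln_ratio_sq_le_KL_of_both_ge[OF probs cond_prob_le_one cond_prob_le_one
        assms(3) ln_\<tau> ge_of_Min[OF assms(5)] ge_of_Min[OF that]]
    by linarith
  ultimately show ?thesis
    by blast
qed

end
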